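(* Let $(\Delta,R)$ be a gentle quiver with $f_{(\Delta,R)}=m\cdot[0,3]+[p+m+2,\,p]$ for some $m,p\in\mathbb N$, and let $\mathcal O_1,\dots,\mathcal O_{m'}$ be the pairwise different triangles in $(\Delta,R)$ (i.e. all of them). If $\alpha_i\in\mathcal O_i$ for each $i$ and $(\Delta',R'):=(\Delta,R)\setminus\{\alpha_i\mid i\in[1,m']\}$, then $(\Delta',R')$ is a gentle quiver of tree type, i.e. $|\Delta'_0|=|\Delta'_1|+1$.
   Context: A quiver $\Delta$ has finite vertex set $\Delta_0$, arrow set $\Delta_1$, maps $s,t$. A path of length $n\ge1$ is $(\alpha_1,\dots,\alpha_n)$ with $s\alpha_i=t\alpha_{i+1}$. A gentle quiver is $(\Delta,R)$ with $\Delta$ connected, $R$ a set of paths of length 2, such that: (1) each vertex is start of at most two arrows and end of at most two arrows; (2) for each arrow $\alpha$ at most one $\beta$ with $s\beta=t\alpha$, $(\beta,\alpha)\notin R$ and at most one $\gamma$ with $t\gamma=s\alpha$, $(\alpha,\gamma)\notin R$; (3) for each $\alpha$ at most one $\beta$ with $(\beta,\alpha)\in R$ and at most one $\gamma$ with $(\alpha,\gamma)\in R$; (4) for some $n$ every path of length $n$ has a subpath in $R$. Invariant: fix $\sigma,\tau:\Delta_1\to\{\pm1\}$ with distinct arrows of same start having opposite $\sigma$, distinct arrows of same end opposite $\tau$, and for $s\alpha=t\beta$: $(\alpha,\beta)\in R$ iff $\sigma\alpha=\tau\beta$; $\sigma\omega=\sigma\alpha_n,\tau\omega=\tau\alpha_1$.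 Permitted paths: no consecutive pair in $R$, plus trivial $1_{x,\varepsilon}$ ($s=t=x$, $\sigma=\varepsilon,\tau=-\varepsilon$); maximal if no arrow $\alpha$ with $s\alpha=t\omega,\sigma\alpha=-\tau\omega$ and no $\beta$ with $t\beta=s\omega,\tau\beta=-\sigma\omega$; set $\mathcal M$. Antipaths: all consecutive pairs in $R$, plus trivial $1'_{x,\varepsilon}$ ($\sigma=\tau=\varepsilon$); maximal if no $\alpha$ with $s\alpha=t\omega,\sigma\alpha=\tau\omega$ and no $\beta$ with $t\beta=s\omega,\tau\beta=\sigma\omega$; set $\mathcal N$. $\phi:\mathcal M\to\mathcal N$, $\omega\mapsto$ unique $\omega'$ with $t\omega'=t\omega,\tau\omega'=-\tau\omega$; $\psi:\mathcal N\to\mathcal M$, $\omega\mapsto$ unique $\omega'$ with $s\omega'=s\omega,\sigma\omega'=-\sigma\omega$; $\Phi=\phi\psi$; $\Phi$-orbit: $p=|\mathcal O|$, $q=$ total length. $\mathcal C$: arrows $\alpha$ with $(\alpha)$ not a subpath of a maximal antipath; $\Psi(\alpha)=$ unique $\beta\in\mathcal C$ with $t\beta=s\alpha,\tau\beta=\sigma\alpha$; $\Psi$-orbit: $p=0$, $q=|\mathcal O|$. $f(p,q)=$ number of orbits with these values; $[p,q]$ the characteristic function of $\{(p,q)\}$. A triangle is a $\Psi$-orbit with exactly 3 elements. For $\Delta_1'\subset\Delta_1$, $(\Delta,R)\setminus\Delta_1'$ has the same vertices, arrows $\Delta_1\setminus\Delta_1'$, and relations those $\rho\in R$ containing no arrow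 of $\Delta_1'$. *)

theory Defs
  imports Main
begin

text \<open>A quiver with relations: vertex set, arrow set, source/target maps, and a set
  of relations R of paths of length 2.  A path (alpha_1,...,alpha_n) is represented as the
  list [alpha_1,...,alpha_n] with s alpha_i = t alpha_(i+1); a length-2 path (beta,alpha)
  is the pair (beta,alpha) with s beta = t alpha.\<close>

record ('v,'a) quiver =
  verts :: "'v set"
  arrs  :: "'a set"
  src   :: "'a \<Rightarrow> 'v"
  tgt   :: "'a \<Rightarrow> 'v"
  rels  :: "('a \<times> 'a) set"

definition is_qpath :: "('v,'a) quiver \<Rightarrow> 'a list \<Rightarrow> bool" where
  "is_qpath Q w \<longleftrightarrow> w \<noteq> [] \<and> set w \<subseteq> arrs Q \<and>
     (\<forall>i. Suc i < length w \<longrightarrow> src Q (w!i) = tgt Q (w!Suc i))"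

definition qconnected :: "('v,'a) quiver \<Rightarrow> bool" where
  "qconnected Q \<longleftrightarrow> verts Q \<noteq> {} \<and>
     (\<forall>x\<in>verts Q. \<forall>y\<in>verts Q.
        (x,y) \<in> ({(src Q a, tgt Q a) | a. a \<in> arrs Q} \<union> {(tgt Q a, src Q a) | a. a \<in> arrs Q})\<^sup>*)"

definition gentle :: "('v,'a) quiver \<Rightarrow> bool" where
  "gentle Q \<longleftrightarrow>
     finite (verts Q) \<and> finite (arrs Q) \<and>
     (\<forall>a\<in>arrs Q. src Q a \<in> verts Q \<and> tgt Q a \<in> verts Q) \<and>
     (\<forall>(a,b)\<in>rels Q. a \<in> arrs Q \<and> b \<in> arrs Q \<and> src Q a = tgt Q b) \<and>
     qconnected Q \<and>
     (\<forall>x\<in>verts Q. card {a\<in>arrs Q. src Q a = x} \<le> 2 \<and> card {a\<in>arrs Q. tgt Q a = x} \<le> 2) \<and>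
     (\<forall>a\<in>arrs Q. card {b\<in>arrs Q. src Q b = tgt Q a \<and> (b,a) \<notin> rels Q} \<le> 1 \<and>
                 card {c\<in>arrs Q. tgt Q c = src Q a \<and> (a,c) \<notin> rels Q} \<le> 1) \<and>
     (\<forall>a\<in>arrs Q. card {b. (b,a) \<in> rels Q} \<le> 1 \<and> card {c. (a,c) \<in> rels Q} \<le> 1) \<and>
     (\<exists>n\<ge>1. \<forall>w. is_qpath Q w \<and> length w = n \<longrightarrow>
                 (\<exists>i. Suc i < n \<and> (w!i, w!Suc i) \<in> rels Q))"

definition qdel :: "('v,'a) quiver \<Rightarrow> 'a set \<Rightarrow> ('v,'a) quiver" where
  "qdel Q D = Q\<lparr>arrs := arrs Q - D,
                 rels := {r \<in> rels Q. fst r \<notin> D \<and> snd r \<notin> D}\<rparr>"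

definition admissible_signs :: "('v,'a) quiver \<Rightarrow> ('a \<Rightarrow> int) \<Rightarrow> ('a \<Rightarrow> int) \<Rightarrow> bool" where
  "admissible_signs Q \<sigma> \<tau> \<longleftrightarrow>
     (\<forall>a\<in>arrs Q. \<sigma> a \<in> {1,-1} \<and> \<tau> a \<in> {1,-1}) \<and>
     (\<forall>a\<in>arrs Q. \<forall>b\<in>arrs Q. a \<noteq> b \<and> src Q a = src Q b \<longrightarrow> \<sigma> a = - \<sigma> b) \<and>
     (\<forall>a\<in>arrs Q. \<forall>b\<in>arrs Q. a \<noteq> b \<and> tgt Q a = tgt Q b \<longrightarrow> \<tau> a = - \<tau> b) \<and>
     (\<forall>a\<in>arrs Q. \<forall>b\<in>arrs Q. src Q a = tgt Q b \<longrightarrow> ((a,b) \<in> rels Q \<longleftrightarrow> \<sigma> a = \<tau> b))"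

text \<open>Triv x e is the trivial (anti)path at x with parameter e; NPath w a path of length >= 1.\<close>
datatype ('v,'a) gpath = Triv 'v int | NPath "'a list"

fun gsrc :: "('v,'a) quiver \<Rightarrow> ('v,'a) gpath \<Rightarrow> 'v" where
  "gsrc Q (Triv x e) = x"
| "gsrc Q (NPath w) = src Q (last w)"

fun gtgt :: "('v,'a) quiver \<Rightarrow> ('v,'a) gpath \<Rightarrow> 'v" where
  "gtgt Q (Triv x e) = x"
| "gtgt Q (NPath w) = tgt Q (hd w)"

fun glen :: "('v,'a) gpath \<Rightarrow> nat" where
  "glen (Triv x e) = 0"
| "glen (NPath w) = length w"

fun psig :: "('a \<Rightarrow> int) \<Rightarrow> ('v,'a) gpath \<Rightarrow> int" where
  "psig \<sigma> (Triv x e) = e"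
| "psig \<sigma> (NPath w) = \<sigma> (last w)"

fun ptau :: "('a \<Rightarrow> int) \<Rightarrow> ('v,'a) gpath \<Rightarrow> int" where
  "ptau \<tau> (Triv x e) = - e"
| "ptau \<tau> (NPath w) = \<tau> (hd w)"

fun asig :: "('a \<Rightarrow> int) \<Rightarrow> ('v,'a) gpath \<Rightarrow> int" where
  "asig \<sigma> (Triv x e) = e"
| "asig \<sigma> (NPath w) = \<sigma> (last w)"

fun atau :: "('a \<Rightarrow> int) \<Rightarrow> ('v,'a) gpath \<Rightarrow> int" where
  "atau \<tau> (Triv x e) = e"
| "atau \<tau> (NPath w) = \<tau> (hd w)"

fun permitted :: "('v,'a) quiver \<Rightarrow> ('v,'a) gpath \<Rightarrow> bool" where
  "permitted Q (Triv x e) \<longleftrightarrow> x \<in> verts Q \<and> e \<in> {1,-1}"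
| "permitted Q (NPath w) \<longleftrightarrow> is_qpath Q w \<and>
     (\<forall>i. Suc i < length w \<longrightarrow> (w!i, w!Suc i) \<notin> rels Q)"

fun antipath :: "('v,'a) quiver \<Rightarrow> ('v,'a) gpath \<Rightarrow> bool" where
  "antipath Q (Triv x e) \<longleftrightarrow> x \<in> verts Q \<and> e \<in> {1,-1}"
| "antipath Q (NPath w) \<longleftrightarrow> is_qpath Q w \<and>
     (\<forall>i. Suc i < length w \<longrightarrow> (w!i, w!Suc i) \<in> rels Q)"

definition max_permitted :: "('v,'a) quiver \<Rightarrow> ('a \<Rightarrow> int) \<Rightarrow> ('a \<Rightarrow> int) \<Rightarrow> ('v,'a) gpath \<Rightarrow> bool" where
  "max_permitted Q \<sigma> \<tau> w \<longleftrightarrow> permitted Q w \<and>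
     \<not> (\<exists>a\<in>arrs Q. src Q a = gtgt Q w \<and> \<sigma> a = - ptau \<tau> w) \<and>
     \<not> (\<exists>b\<in>arrs Q. tgt Q b = gsrc Q w \<and> \<tau> b = - psig \<sigma> w)"

definition max_antipath :: "('v,'a) quiver \<Rightarrow> ('a \<Rightarrow> int) \<Rightarrow> ('a \<Rightarrow> int) \<Rightarrow> ('v,'a) gpath \<Rightarrow> bool" where
  "max_antipath Q \<sigma> \<tau> w \<longleftrightarrow> antipath Q w \<and>
     \<not> (\<exists>a\<in>arrs Q. src Q a = gtgt Q w \<and> \<sigma> a = atau \<tau> w) \<and>
     \<not> (\<exists>b\<in>arrs Q. tgt Q b = gsrc Q w \<and> \<tau> b = asig \<sigma> w)"

definition Mset :: "('v,'a) quiver \<Rightarrow> ('a \<Rightarrow> int) \<Rightarrow> ('a \<Rightarrow> int) \<Rightarrow> ('v,'a) gpath set" where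
  "Mset Q \<sigma> \<tau> = {w. max_permitted Q \<sigma> \<tau> w}"

definition Nset :: "('v,'a) quiver \<Rightarrow> ('a \<Rightarrow> int) \<Rightarrow> ('a \<Rightarrow> int) \<Rightarrow> ('v,'a) gpath set" where
  "Nset Q \<sigma> \<tau> = {w. max_antipath Q \<sigma> \<tau> w}"

definition phi_map :: "('v,'a) quiver \<Rightarrow> ('a \<Rightarrow> int) \<Rightarrow> ('a \<Rightarrow> int) \<Rightarrow> ('v,'a) gpath \<Rightarrow> ('v,'a) gpath" where
  "phi_map Q \<sigma> \<tau> w = (THE w'. w' \<in> Nset Q \<sigma> \<tau> \<and> gtgt Q w' = gtgt Q w \<and> atau \<tau> w' = - ptau \<tau> w)"

definition psi_map :: "('v,'a) quiver \<Rightarrow> ('a \<Rightarrow> int) \<Rightarrow> ('a \<Rightarrow> int) \<Rightarrow> ('v,'a) gpath \<Rightarrow> ('v,'a) gpath" where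
  "psi_map Q \<sigma> \<tau> w = (THE w'. w' \<in> Mset Q \<sigma> \<tau> \<and> gsrc Q w' = gsrc Q w \<and> psig \<sigma> w' = - asig \<sigma> w)"

definition Phi_map :: "('v,'a) quiver \<Rightarrow> ('a \<Rightarrow> int) \<Rightarrow> ('a \<Rightarrow> int) \<Rightarrow> ('v,'a) gpath \<Rightarrow> ('v,'a) gpath" where
  "Phi_map Q \<sigma> \<tau> = phi_map Q \<sigma> \<tau> \<circ> psi_map Q \<sigma> \<tau>"

definition Cset :: "('v,'a) quiver \<Rightarrow> ('a \<Rightarrow> int) \<Rightarrow> ('a \<Rightarrow> int) \<Rightarrow> 'a set" where
  "Cset Q \<sigma> \<tau> = {a \<in> arrs Q. \<not> (\<exists>w. NPath w \<in> Nset Q \<sigma> \<tau> \<and> a \<in> set w)}"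

definition Psi_map :: "('v,'a) quiver \<Rightarrow> ('a \<Rightarrow> int) \<Rightarrow> ('a \<Rightarrow> int) \<Rightarrow> 'a \<Rightarrow> 'a" where
  "Psi_map Q \<sigma> \<tau> a = (THE b. b \<in> Cset Q \<sigma> \<tau> \<and> tgt Q b = src Q a \<and> \<tau> b = \<sigma> a)"

definition orb :: "('b \<Rightarrow> 'b) \<Rightarrow> 'b \<Rightarrow> 'b set" where
  "orb g x = {(g ^^ n) x | n. True}"

definition Phi_orbits :: "('v,'a) quiver \<Rightarrow> ('a \<Rightarrow> int) \<Rightarrow> ('a \<Rightarrow> int) \<Rightarrow> ('v,'a) gpath set set" where
  "Phi_orbits Q \<sigma> \<tau> = orb (Phi_map Q \<sigma> \<tau>) ` Nset Q \<sigma> \<tau>"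

definition Psi_orbits :: "('v,'a) quiver \<Rightarrow> ('a \<Rightarrow> int) \<Rightarrow> ('a \<Rightarrow> int) \<Rightarrow> 'a set set" where
  "Psi_orbits Q \<sigma> \<tau> = orb (Psi_map Q \<sigma> \<tau>) ` Cset Q \<sigma> \<tau>"

definition finv :: "('v,'a) quiver \<Rightarrow> ('a \<Rightarrow> int) \<Rightarrow> ('a \<Rightarrow> int) \<Rightarrow> nat \<Rightarrow> nat \<Rightarrow> nat" where
  "finv Q \<sigma> \<tau> p q =
     card {X \<in> Phi_orbits Q \<sigma> \<tau>. card X = p \<and> (\<Sum>w\<in>X. glen w) = q}
   + card {X \<in> Psi_orbits Q \<sigma> \<tau>. p = 0 \<and> card X = q}"

definition triangles :: "('v,'a) quiver \<Rightarrow> ('a \<Rightarrow> int) \<Rightarrow> ('a \<Rightarrow> int) \<Rightarrow> 'a set set" where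
  "triangles Q \<sigma> \<tau> = {X \<in> Psi_orbits Q \<sigma> \<tau>. card X = 3}"

end

theory Submission
  imports Defs
begin

text \<open>Pairs (x, e) of a vertex and a sign are in bijection with the disjoint union of the arrows
  (via (s a, \<sigma> a)) and the maximal antipaths (via (t w, \<tau> w)), so 2|\<Delta>_0| = |\<N>| + |\<Delta>_1|.
  An arrow lies either in \<C> or on exactly one maximal antipath, exactly once, so
  |\<Delta>_1| = |\<C>| + \<Sum>_w |w|.  The \<Psi>-orbits partition \<C> and the \<Phi>-orbits partition \<N>, so the
  hypothesis on f says that \<C> consists of m triangles and \<N> is a single \<Phi>-orbit of p + m + 2
  antipaths of total length p.  Hence |\<Delta>_1| = 3m + p and |\<Delta>_0| = 2m + p + 1, and deleting one arrow
  from each triangle leaves 2m + p arrows.  Deletion preserves the local gentleness conditions,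
  and it preserves connectivity because the other two arrows of a triangle form a path between
  the endpoints of the deleted one.\<close>

section \<open>Chains of a relation\<close>

lemma successively_maximal_unique:
  assumes functional: "\<And>x y z. R x y \<Longrightarrow> R x z \<Longrightarrow> y = z"
  shows "successively R l1 \<Longrightarrow> successively R l2 \<Longrightarrow> l1 \<noteq> [] \<Longrightarrow> l2 \<noteq> [] \<Longrightarrow>
    hd l1 = hd l2 \<Longrightarrow> \<nexists>y. R (last l1) y \<Longrightarrow> \<nexists>y. R (last l2) y \<Longrightarrow> l1 = l2"
proof (induction l1 arbitrary: l2)
  case (Cons x xs)
  then obtain ys where l2: "l2 = x # ys" by (cases l2) auto
  show ?case
  proof (cases xs)
    case Nil
    then show ?thesis using Cons.prems l2 by (cases ys) auto
  next
    case (Cons z zs)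
    then obtain u us where ys: "ys = u # us" using Cons.prems l2 by (cases ys) auto
    have "R x z" "R x u" using Cons.prems l2 Cons ys by auto
    then have "z = u" by (rule functional)
    then have "xs = ys" using Cons.IH[of ys] Cons.prems l2 Cons ys by auto
    then show ?thesis using l2 by simp
  qed
qed simp

lemma successively_nth_eq_from_source:
  assumes injective: "\<And>x y z. R x z \<Longrightarrow> R y z \<Longrightarrow> x = y"
  shows "successively R l1 \<Longrightarrow> successively R l2 \<Longrightarrow> \<nexists>z. R z (hd l1) \<Longrightarrow> \<nexists>z. R z (hd l2) \<Longrightarrow>
    i < length l1 \<Longrightarrow> j < length l2 \<Longrightarrow> l1 ! i = l2 ! j \<Longrightarrow> i = j \<and> hd l1 = hd l2"
proof (induction i arbitrary: j)
  case 0
  show ?case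
  proof (cases j)
    case (Suc j')
    then have "R (l2 ! j') (l2 ! j)" using "0.prems"(2,6) by (simp add: successively_nth)
    then show ?thesis using "0.prems" by (simp add: hd_conv_nth)
  qed (use "0.prems" in \<open>simp add: hd_conv_nth\<close>)
next
  case (Suc i')
  show ?case
  proof (cases j)
    case 0
    have "R (l1 ! i') (l1 ! Suc i')" using Suc.prems(1,5) by (simp add: successively_nth)
    then show ?thesis using Suc.prems 0 by (simp add: hd_conv_nth)
  next
    case (Suc j')
    have "R (l1 ! i') (l1 ! Suc i')" "R (l2 ! j') (l2 ! Suc j')"
      using Suc.prems(1,2,5,6) \<open>j = Suc j'\<close> by (simp_all add: successively_nth)
    then have "l1 ! i' = l2 ! j'" using injective Suc.prems \<open>j = Suc j'\<close> by simp
    then show ?thesis using Suc.IH[of j'] Suc.prems \<open>j = Suc j'\<close> by simp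
  qed
qed

lemma distinct_successively_from_source:
  assumes "\<And>x y z. R x z \<Longrightarrow> R y z \<Longrightarrow> x = y" and "successively R l" and "\<nexists>z. R z (hd l)"
  shows "distinct l"
  using successively_nth_eq_from_source[OF assms(1,2,2,3,3)] by (auto simp: distinct_conv_nth)

lemma set_successively_subset:
  assumes "\<And>x y. R x y \<Longrightarrow> y \<in> S"
  shows "successively R l \<Longrightarrow> hd l \<in> S \<Longrightarrow> set l \<subseteq> S"
  by (induction l) (use assms in \<open>auto simp: successively_Cons\<close>)

text \<open>A chain starting at a source of a backward-injective relation cannot revisit an element,
  so inside a finite set it can be prolonged only finitely often.\<close>

lemma maximal_successively_exists:
  assumes fin: "finite S" and closed: "\<And>x y. R x y \<Longrightarrow> y \<in> S"
    and injective: "\<And>x y z. R x z \<Longrightarrow> R y z \<Longrightarrow> x = y"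
    and x0: "x0 \<in> S" and source: "\<nexists>z. R z x0"
  obtains l where "successively R l" "l \<noteq> []" "hd l = x0" "set l \<subseteq> S" "\<nexists>y. R (last l) y"
proof -
  have bounded: "length l \<le> card S" if l: "successively R l" "hd l = x0" for l
  proof -
    have "distinct l" using distinct_successively_from_source[OF injective l(1)] source l(2) by simp
    moreover have "set l \<subseteq> S" using set_successively_subset[OF closed l(1)] l(2) x0 by simp
    ultimately show ?thesis by (metis card_mono distinct_card fin)
  qed
  have "\<exists>l'. successively R l' \<and> l' \<noteq> [] \<and> hd l' = x0 \<and> (\<nexists>y. R (last l') y)"
    if "successively R l" "l \<noteq> []" "hd l = x0" for l
    using that
  proof (induction "card S - length l" arbitrary: l rule: less_induct)
    case less
    show ?case
    proof (cases "\<exists>y. R (last l) y")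
      case True
      then obtain y where "R (last l) y" ..
      then have longer: "successively R (l @ [y])"
        using less.prems by (auto simp: successively_append_iff)
      then have "card S - length (l @ [y]) < card S - length l"
        using bounded[OF longer] less.prems by simp
      from less.hyps[OF this longer] less.prems show ?thesis by simp
    qed (use less.prems in blast)
  qed
  from this[of "[x0]"]
  obtain l where "successively R l" "l \<noteq> []" "hd l = x0" "\<nexists>y. R (last l) y"
    by auto
  moreover have "set l \<subseteq> S" using set_successively_subset[OF closed] calculation(1,3) x0 by simp
  ultimately show thesis using that by blast
qed

section \<open>Orbits of an injective self-map of a finite set\<close>

lemma funpow_in_set: "g ` S \<subseteq> S \<Longrightarrow> x \<in> S \<Longrightarrow> (g ^^ k) x \<in> S"
  by (induction k) auto

lemma funpow_cancel_inj_on: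
  assumes inj: "inj_on g S" and gS: "g ` S \<subseteq> S" and x: "x \<in> S"
  shows "(g ^^ (i + d)) x = (g ^^ i) x \<Longrightarrow> (g ^^ d) x = x"
proof (induction i)
  case (Suc i)
  then have "(g ^^ (i + d)) x = (g ^^ i) x"
    using inj funpow_in_set[OF gS x] by (auto simp: inj_on_def)
  then show ?case using Suc.IH by simp
qed simp

lemma funpow_period_exists:
  assumes fin: "finite S" and inj: "inj_on g S" and gS: "g ` S \<subseteq> S" and x: "x \<in> S"
  obtains n where "n > 0" "(g ^^ n) x = x"
proof -
  have "\<not> inj_on (\<lambda>k. (g ^^ k) x) {..card S}"
  proof
    assume "inj_on (\<lambda>k. (g ^^ k) x) {..card S}"
    moreover have "(\<lambda>k. (g ^^ k) x) ` {..card S} \<subseteq> S" using funpow_in_set[OF gS x] by auto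
    ultimately have "card {..card S} \<le> card S" using card_inj_on_le fin by blast
    then show False by simp
  qed
  then obtain i j where ij: "i \<noteq> j" "(g ^^ i) x = (g ^^ j) x" unfolding inj_on_def by blast
  have period: "(g ^^ (b - a)) x = x" if "a < b" "(g ^^ a) x = (g ^^ b) x" for a b
    using funpow_cancel_inj_on[OF inj gS x, of a "b - a"] that by simp
  show thesis
  proof (cases "i < j")
    case True
    show thesis by (rule that[of "j - i"]) (use True period[OF True ij(2)] in simp_all)
  next
    case False
    then have "j < i" using ij(1) by simp
    show thesis by (rule that[of "i - j"]) (use \<open>j < i\<close> period[OF \<open>j < i\<close> ij(2)[symmetric]] in simp_all)
  qed
qed

lemma funpow_mult_fixpoint: "(g ^^ n) x = x \<Longrightarrow> (g ^^ (n * k)) x = x"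
proof -
  assume "(g ^^ n) x = x"
  then have "((g ^^ n) ^^ k) x = x" by (induction k) simp_all
  then show ?thesis by (simp add: funpow_mult)
qed

lemma orb_self: "x \<in> orb g x"
  unfolding orb_def by (auto intro: exI[of _ 0])

lemma orb_subset:
  assumes "g ` S \<subseteq> S" and "x \<in> S"
  shows "orb g x \<subseteq> S"
  using funpow_in_set[OF assms] unfolding orb_def by blast

lemma orb_subset_orb: "y \<in> orb g x \<Longrightarrow> orb g y \<subseteq> orb g x"
proof
  fix z assume "y \<in> orb g x" "z \<in> orb g y"
  then obtain k l where "y = (g ^^ k) x" "z = (g ^^ l) y" unfolding orb_def by blast
  then have "z = (g ^^ (l + k)) x" by (simp add: funpow_add)
  then show "z \<in> orb g x" unfolding orb_def by blast
qed

lemma orb_eq_if_mem: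
  assumes fin: "finite S" and inj: "inj_on g S" and gS: "g ` S \<subseteq> S" and x: "x \<in> S"
    and y: "y \<in> orb g x"
  shows "orb g y = orb g x"
proof
  show "orb g y \<subseteq> orb g x" using orb_subset_orb[OF y] .
  obtain n where n: "n > 0" "(g ^^ n) x = x" using funpow_period_exists[OF fin inj gS x] by blast
  obtain k where k: "y = (g ^^ k) x" using y unfolding orb_def by blast
  have "(n - 1) * k + k = n * k" using n(1) by (cases n) simp_all
  then have "(g ^^ ((n - 1) * k)) y = (g ^^ (n * k)) x"
    by (metis k funpow_add comp_apply)
  then have "x = (g ^^ ((n - 1) * k)) y" using funpow_mult_fixpoint[OF n(2)] by simp
  then have "x \<in> orb g y" unfolding orb_def by blast
  then show "orb g x \<subseteq> orb g y" by (rule orb_subset_orb)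
qed

lemma orbs_disjoint:
  assumes fin: "finite S" and inj: "inj_on g S" and gS: "g ` S \<subseteq> S"
    and "X \<in> orb g ` S" "Y \<in> orb g ` S" "X \<noteq> Y"
  shows "X \<inter> Y = {}"
proof (rule ccontr)
  obtain x y where xy: "x \<in> S" "y \<in> S" "X = orb g x" "Y = orb g y" using assms(4,5) by blast
  assume "X \<inter> Y \<noteq> {}"
  then obtain z where "z \<in> orb g x" "z \<in> orb g y" using xy by blast
  then have "orb g z = X" "orb g z = Y"
    using orb_eq_if_mem[OF fin inj gS xy(1)] orb_eq_if_mem[OF fin inj gS xy(2)] xy(3,4) by blast+
  then show False using \<open>X \<noteq> Y\<close> by simp
qed

lemma Union_orbs:
  assumes "g ` S \<subseteq> S"
  shows "\<Union> (orb g ` S) = S"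
proof
  show "\<Union> (orb g ` S) \<subseteq> S" using orb_subset[OF assms] by (simp add: UN_least)
  show "S \<subseteq> \<Union> (orb g ` S)" using orb_self by fast
qed

lemma card_orb_le:
  assumes "finite A" and "\<And>k. (g ^^ k) a \<in> A"
  shows "card (orb g a) \<le> card A"
proof -
  have "orb g a \<subseteq> A" using assms(2) unfolding orb_def by blast
  then show ?thesis by (rule card_mono[OF assms(1)])
qed

lemma orb_card_3:
  assumes fin: "finite S" and inj: "inj_on g S" and gS: "g ` S \<subseteq> S" and a: "a \<in> S"
    and card3: "card (orb g a) = 3"
  shows "g a \<noteq> a" "g (g a) \<noteq> a" "g (g (g a)) = a"
proof -
  have mem: "(g ^^ k) a \<in> orb g a" for k unfolding orb_def by blast
  have finO: "finite (orb g a)" using finite_subset[OF orb_subset[OF gS a] fin] .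
  have in_S: "g a \<in> S" "g (g a) \<in> S" using gS a by auto
  show ga: "g a \<noteq> a"
  proof
    assume "g a = a"
    then have "(g ^^ k) a \<in> {a}" for k by (induction k) simp_all
    then show False using card_orb_le[of "{a}" g a] card3 by simp
  qed
  show gga: "g (g a) \<noteq> a"
  proof
    assume period2: "g (g a) = a"
    have "(g ^^ k) a \<in> {a, g a}" for k
    proof (induction k)
      case (Suc k)
      then consider "(g ^^ k) a = a" | "(g ^^ k) a = g a" by blast
      then show ?case using period2 by cases simp_all
    qed simp
    then have "card (orb g a) \<le> card {a, g a}" by (intro card_orb_le) simp_all
    also have "\<dots> \<le> 2" by (simp add: card_insert_if)
    finally show False using card3 by simp
  qed
  have ggga: "g (g a) \<noteq> g a" using ga inj_onD[OF inj _ in_S(1) a] by blast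
  have "{a, g a, g (g a)} \<subseteq> orb g a" using mem[of 0] mem[of 1] mem[of 2] by (simp add: numeral_2_eq_2)
  moreover have "card {a, g a, g (g a)} = 3" using ga gga ggga by simp
  ultimately have "orb g a = {a, g a, g (g a)}" using card_subset_eq[OF finO] card3 by metis
  then have "g (g (g a)) \<in> {a, g a, g (g a)}" using mem[of 3] by (simp add: numeral_3_eq_3)
  moreover have "g (g (g a)) \<noteq> g a" using gga inj_onD[OF inj _ in_S(2) a] by blast
  moreover have "g (g (g a)) \<noteq> g (g a)" using ggga inj_onD[OF inj _ in_S(2) in_S(1)] by blast
  ultimately show "g (g (g a)) = a" by simp
qed

section \<open>Deleting arrows\<close>

lemma qdel_simps [simp]:
  "verts (qdel Q D) = verts Q" "arrs (qdel Q D) = arrs Q - D" "src (qdel Q D) = src Q"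
  "tgt (qdel Q D) = tgt Q" "rels (qdel Q D) = {r \<in> rels Q. fst r \<notin> D \<and> snd r \<notin> D}"
  by (simp_all add: qdel_def)

lemma qconnected_qdel:
  fixes Q :: "('v, 'a) quiver"
  assumes connected: "qconnected Q"
    and bypass: "\<And>a. a \<in> arrs Q \<Longrightarrow> a \<in> D \<Longrightarrow> \<exists>b c. b \<in> arrs Q - D \<and> c \<in> arrs Q - D \<and>
              tgt Q b = src Q a \<and> tgt Q c = src Q b \<and> src Q c = tgt Q a"
  shows "qconnected (qdel Q D)"
proof -
  define E where "E R = {(src R a, tgt R a) | a. a \<in> arrs R} \<union> {(tgt R a, src R a) | a. a \<in> arrs R}"
    for R :: "('v, 'a) quiver"
  have conn: "qconnected R \<longleftrightarrow> verts R \<noteq> {} \<and> (\<forall>x\<in>verts R. \<forall>y\<in>verts R. (x, y) \<in> (E R)\<^sup>*)" for R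
    unfolding qconnected_def E_def ..
  have edge: "(src R a, tgt R a) \<in> E R" "(tgt R a, src R a) \<in> E R" if "a \<in> arrs R" for a R
    unfolding E_def using that by blast+
  have "E Q \<subseteq> (E (qdel Q D))\<^sup>*"
  proof
    fix e assume "e \<in> E Q"
    then obtain a where a: "a \<in> arrs Q" and e: "e = (src Q a, tgt Q a) \<or> e = (tgt Q a, src Q a)"
      unfolding E_def by blast
    show "e \<in> (E (qdel Q D))\<^sup>*"
    proof (cases "a \<in> D")
      case False
      then show ?thesis using a e edge[of a "qdel Q D"] by auto
    next
      case True
      then obtain b c where bc: "b \<in> arrs Q - D" "c \<in> arrs Q - D" "tgt Q b = src Q a"
        "tgt Q c = src Q b" "src Q c = tgt Q a" using bypass[OF a] by blast
      then have "(src Q a, src Q b) \<in> E (qdel Q D)" "(src Q b, src Q a) \<in> E (qdel Q D)"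
        "(src Q b, tgt Q a) \<in> E (qdel Q D)" "(tgt Q a, src Q b) \<in> E (qdel Q D)"
        using edge[of b "qdel Q D"] edge[of c "qdel Q D"] by simp_all
      then have "(src Q a, tgt Q a) \<in> (E (qdel Q D))\<^sup>*" "(tgt Q a, src Q a) \<in> (E (qdel Q D))\<^sup>*"
        by (meson r_into_rtrancl rtrancl_into_rtrancl)+
      then show ?thesis using e by blast
    qed
  qed
  then have "(E Q)\<^sup>* \<subseteq> (E (qdel Q D))\<^sup>*" by (rule rtrancl_subset_rtrancl)
  then show ?thesis using connected unfolding conn by auto
qed

lemma card_arrs_qdel_le:
  "finite (arrs Q) \<Longrightarrow> card {a \<in> arrs (qdel Q D). P a} \<le> card {a \<in> arrs Q. P a}"
  by (rule card_mono) auto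

lemma card_unrelated_qdel_le:
  assumes fin: "finite (arrs Q)" and a: "a \<notin> D"
  shows "card {b\<in>arrs (qdel Q D). src Q b = tgt Q a \<and> (b, a) \<notin> rels (qdel Q D)}
      \<le> card {b\<in>arrs Q. src Q b = tgt Q a \<and> (b, a) \<notin> rels Q}"
    "card {c\<in>arrs (qdel Q D). tgt Q c = src Q a \<and> (a, c) \<notin> rels (qdel Q D)}
      \<le> card {c\<in>arrs Q. tgt Q c = src Q a \<and> (a, c) \<notin> rels Q}"
  using a by (auto intro!: card_mono fin)

lemma qdel_relations_bounded:
  assumes "\<exists>n\<ge>1. \<forall>w. is_qpath Q w \<and> length w = n \<longrightarrow> (\<exists>i. Suc i < n \<and> (w!i, w!Suc i) \<in> rels Q)"
  shows "\<exists>n\<ge>1. \<forall>w. is_qpath (qdel Q D) w \<and> length w = n \<longrightarrow>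
    (\<exists>i. Suc i < n \<and> (w!i, w!Suc i) \<in> rels (qdel Q D))"
proof -
  obtain n where "n \<ge> 1"
    and n: "\<forall>w. is_qpath Q w \<and> length w = n \<longrightarrow> (\<exists>i. Suc i < n \<and> (w!i, w!Suc i) \<in> rels Q)"
    using assms by blast
  have "\<exists>i. Suc i < n \<and> (w!i, w!Suc i) \<in> rels (qdel Q D)"
    if w: "is_qpath (qdel Q D) w" "length w = n" for w
  proof -
    have "is_qpath Q w" using w(1) unfolding is_qpath_def by auto
    then obtain i where i: "Suc i < n" "(w!i, w!Suc i) \<in> rels Q" using n w(2) by blast
    moreover have "w!i \<in> set w" "w!Suc i \<in> set w" using i(1) w(2) by simp_all
    then have "w!i \<notin> D" "w!Suc i \<notin> D" using w(1) unfolding is_qpath_def by auto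
    ultimately show ?thesis by auto
  qed
  then show ?thesis using \<open>n \<ge> 1\<close> by blast
qed

lemma gentle_qdel:
  fixes Q :: "('v, 'a) quiver"
  assumes gentle: "gentle Q" and connected: "qconnected (qdel Q D)"
  shows "gentle (qdel Q D)"
proof -
  have fin: "finite (arrs Q)"
    and rels: "\<forall>(a, b)\<in>rels Q. a \<in> arrs Q \<and> b \<in> arrs Q \<and> src Q a = tgt Q b"
    and degree: "\<forall>x\<in>verts Q. card {a\<in>arrs Q. src Q a = x} \<le> 2 \<and> card {a\<in>arrs Q. tgt Q a = x} \<le> 2"
    and unrelated: "\<forall>a\<in>arrs Q. card {b\<in>arrs Q. src Q b = tgt Q a \<and> (b, a) \<notin> rels Q} \<le> 1 \<and>
                 card {c\<in>arrs Q. tgt Q c = src Q a \<and> (a, c) \<notin> rels Q} \<le> 1"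
    and related: "\<forall>a\<in>arrs Q. card {b. (b, a) \<in> rels Q} \<le> 1 \<and> card {c. (a, c) \<in> rels Q} \<le> 1"
    and bounded: "\<exists>n\<ge>1. \<forall>w. is_qpath Q w \<and> length w = n \<longrightarrow> (\<exists>i. Suc i < n \<and> (w!i, w!Suc i) \<in> rels Q)"
    using gentle unfolding gentle_def by blast+
  let ?Q = "qdel Q D"
  have "card {a\<in>arrs ?Q. src ?Q a = x} \<le> 2 \<and> card {a\<in>arrs ?Q. tgt ?Q a = x} \<le> 2"
    if "x \<in> verts ?Q" for x
    using le_trans[OF card_arrs_qdel_le[OF fin, of D "\<lambda>a. src Q a = x"]]
      le_trans[OF card_arrs_qdel_le[OF fin, of D "\<lambda>a. tgt Q a = x"]] degree that by simp
  moreover have "card {b\<in>arrs ?Q. src ?Q b = tgt ?Q a \<and> (b, a) \<notin> rels ?Q} \<le> 1 \<and>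
      card {c\<in>arrs ?Q. tgt ?Q c = src ?Q a \<and> (a, c) \<notin> rels ?Q} \<le> 1"
    if "a \<in> arrs ?Q" for a
    using unrelated that card_unrelated_qdel_le[OF fin, of a D] by (simp add: le_trans)
  moreover have "card {b. (b, a) \<in> rels ?Q} \<le> 1 \<and> card {c. (a, c) \<in> rels ?Q} \<le> 1"
    if a: "a \<in> arrs ?Q" for a
  proof -
    have "finite {b. (b, a) \<in> rels Q}" "finite {c. (a, c) \<in> rels Q}"
      using rels by (auto intro: finite_subset[OF _ fin])
    then have "card {b. (b, a) \<in> rels ?Q} \<le> card {b. (b, a) \<in> rels Q}"
      "card {c. (a, c) \<in> rels ?Q} \<le> card {c. (a, c) \<in> rels Q}"
      by (auto intro: card_mono)
    then show ?thesis using related a by force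
  qed
  moreover have "\<forall>(a, b)\<in>rels ?Q. a \<in> arrs ?Q \<and> b \<in> arrs ?Q \<and> src ?Q a = tgt ?Q b"
    using rels by auto
  ultimately show ?thesis
    using gentle connected qdel_relations_bounded[OF bounded] unfolding gentle_def
    by (simp only: qdel_simps) blast
qed

section \<open>Maximal paths and antipaths of a gentle quiver\<close>


locale signed_gentle =
  fixes Q :: "('v, 'a) quiver" and \<sigma> \<tau> :: "'a \<Rightarrow> int"
  assumes gentle: "gentle Q" and signs: "admissible_signs Q \<sigma> \<tau>"
begin

abbreviation "NN \<equiv> Nset Q \<sigma> \<tau>"
abbreviation "MM \<equiv> Mset Q \<sigma> \<tau>"
abbreviation "CC \<equiv> Cset Q \<sigma> \<tau>"
abbreviation related :: "'a \<Rightarrow> 'a \<Rightarrow> bool" where "related a b \<equiv> (a, b) \<in> rels Q"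

lemma finite_arrs: "finite (arrs Q)" and finite_verts: "finite (verts Q)"
  using gentle unfolding gentle_def by simp_all

lemma src_in_verts: "a \<in> arrs Q \<Longrightarrow> src Q a \<in> verts Q"
  and tgt_in_verts: "a \<in> arrs Q \<Longrightarrow> tgt Q a \<in> verts Q"
  using gentle unfolding gentle_def by simp_all

lemma relatedD: "related a b \<Longrightarrow> a \<in> arrs Q \<and> b \<in> arrs Q \<and> src Q a = tgt Q b"
  using gentle unfolding gentle_def by blast

lemma sign_values: "a \<in> arrs Q \<Longrightarrow> \<sigma> a \<in> {1, -1} \<and> \<tau> a \<in> {1, -1}"
  using signs unfolding admissible_signs_def by simp

lemma src_sign_inj:
  assumes "a \<in> arrs Q" "b \<in> arrs Q" "src Q a = src Q b" "\<sigma> a = \<sigma> b"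
  shows "a = b"
proof (rule ccontr)
  assume "a \<noteq> b"
  then have "\<sigma> a = - \<sigma> b" using assms(1-3) signs unfolding admissible_signs_def by blast
  then show False using assms(4) sign_values[OF assms(1)] by simp
qed

lemma tgt_sign_inj:
  assumes "a \<in> arrs Q" "b \<in> arrs Q" "tgt Q a = tgt Q b" "\<tau> a = \<tau> b"
  shows "a = b"
proof (rule ccontr)
  assume "a \<noteq> b"
  then have "\<tau> a = - \<tau> b" using assms(1-3) signs unfolding admissible_signs_def by blast
  then show False using assms(4) sign_values[OF assms(1)] by simp
qed

lemma related_iff_signs:
  "a \<in> arrs Q \<Longrightarrow> b \<in> arrs Q \<Longrightarrow> src Q a = tgt Q b \<Longrightarrow> related a b \<longleftrightarrow> \<sigma> a = \<tau> b"
  using signs unfolding admissible_signs_def by blast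

lemma related_signs: "related a b \<Longrightarrow> \<sigma> a = \<tau> b"
  using related_iff_signs relatedD by blast

lemma related_left_unique: "related b a \<Longrightarrow> related c a \<Longrightarrow> b = c"
  using relatedD related_signs src_sign_inj by metis

lemma related_right_unique: "related a b \<Longrightarrow> related a c \<Longrightarrow> b = c"
  using relatedD related_signs tgt_sign_inj by metis

lemma no_related_succ_iff:
  assumes "a \<in> arrs Q"
  shows "(\<nexists>b. related a b) \<longleftrightarrow> \<not> (\<exists>b\<in>arrs Q. tgt Q b = src Q a \<and> \<tau> b = \<sigma> a)"
proof
  assume "\<nexists>b. related a b"
  show "\<not> (\<exists>b\<in>arrs Q. tgt Q b = src Q a \<and> \<tau> b = \<sigma> a)"
  proof
    assume "\<exists>b\<in>arrs Q. tgt Q b = src Q a \<and> \<tau> b = \<sigma> a"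
    then obtain b where "b \<in> arrs Q" "tgt Q b = src Q a" "\<tau> b = \<sigma> a" by blast
    then have "related a b" using related_iff_signs[OF assms] by simp
    then show False using \<open>\<nexists>b. related a b\<close> by blast
  qed
qed (use relatedD related_signs in fastforce)

lemma no_related_pred_iff:
  assumes "b \<in> arrs Q"
  shows "(\<nexists>a. related a b) \<longleftrightarrow> \<not> (\<exists>a\<in>arrs Q. src Q a = tgt Q b \<and> \<sigma> a = \<tau> b)"
proof
  assume "\<nexists>a. related a b"
  show "\<not> (\<exists>a\<in>arrs Q. src Q a = tgt Q b \<and> \<sigma> a = \<tau> b)"
  proof
    assume "\<exists>a\<in>arrs Q. src Q a = tgt Q b \<and> \<sigma> a = \<tau> b"
    then obtain a where "a \<in> arrs Q" "src Q a = tgt Q b" "\<sigma> a = \<tau> b" by blast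
    then have "related a b" using related_iff_signs[OF _ assms] by simp
    then show False using \<open>\<nexists>a. related a b\<close> by blast
  qed
qed (use relatedD related_signs in fastforce)

definition permitted_step :: "'a \<Rightarrow> 'a \<Rightarrow> bool" where
  "permitted_step a b \<longleftrightarrow> a \<in> arrs Q \<and> b \<in> arrs Q \<and> src Q a = tgt Q b \<and> \<not> related a b"

lemma permitted_step_iff:
  "permitted_step a b \<longleftrightarrow> a \<in> arrs Q \<and> b \<in> arrs Q \<and> src Q a = tgt Q b \<and> \<sigma> a = - \<tau> b"
proof -
  have "\<not> related a b \<longleftrightarrow> \<sigma> a = - \<tau> b" if "a \<in> arrs Q" "b \<in> arrs Q" "src Q a = tgt Q b"
    using related_iff_signs[OF that] sign_values[OF that(1)] sign_values[OF that(2)] by auto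
  then show ?thesis unfolding permitted_step_def by blast
qed

lemma permitted_step_left_unique: "permitted_step b a \<Longrightarrow> permitted_step c a \<Longrightarrow> b = c"
  unfolding permitted_step_iff using src_sign_inj by auto

lemma permitted_step_right_unique: "permitted_step a b \<Longrightarrow> permitted_step a c \<Longrightarrow> b = c"
  unfolding permitted_step_iff using tgt_sign_inj by auto

lemma permitted_NPath_iff:
  "permitted Q (NPath w) \<longleftrightarrow> w \<noteq> [] \<and> set w \<subseteq> arrs Q \<and> successively permitted_step w"
proof -
  have "successively permitted_step w \<longleftrightarrow>
      (\<forall>i. Suc i < length w \<longrightarrow> src Q (w!i) = tgt Q (w!Suc i) \<and> \<not> related (w!i) (w!Suc i))"
    if "set w \<subseteq> arrs Q"
  proof -
    have "w!i \<in> arrs Q \<and> w!Suc i \<in> arrs Q" if "Suc i < length w" for i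
      using \<open>set w \<subseteq> arrs Q\<close> that by (auto dest: Suc_lessD)
    then show ?thesis unfolding successively_conv_nth permitted_step_def by blast
  qed
  then show ?thesis by (auto simp: is_qpath_def)
qed

lemma antipath_NPath_iff:
  "antipath Q (NPath w) \<longleftrightarrow> w \<noteq> [] \<and> set w \<subseteq> arrs Q \<and> successively related w"
  using relatedD by (auto simp: is_qpath_def successively_conv_nth)

lemma Nset_iff: "w \<in> NN \<longleftrightarrow> antipath Q w \<and>
    \<not> (\<exists>a\<in>arrs Q. src Q a = gtgt Q w \<and> \<sigma> a = atau \<tau> w) \<and>
    \<not> (\<exists>b\<in>arrs Q. tgt Q b = gsrc Q w \<and> \<tau> b = asig \<sigma> w)"
  by (simp add: Nset_def max_antipath_def)

lemma Mset_iff: "w \<in> MM \<longleftrightarrow> permitted Q w \<and>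
    \<not> (\<exists>a\<in>arrs Q. src Q a = gtgt Q w \<and> \<sigma> a = - ptau \<tau> w) \<and>
    \<not> (\<exists>b\<in>arrs Q. tgt Q b = gsrc Q w \<and> \<tau> b = - psig \<sigma> w)"
  by (simp add: Mset_def max_permitted_def)

lemma Nset_NPathD:
  assumes "NPath l \<in> NN"
  shows "l \<noteq> []" "set l \<subseteq> arrs Q" "successively related l"
    "\<nexists>b. related b (hd l)" "\<nexists>c. related (last l) c"
proof -
  show "l \<noteq> []" "set l \<subseteq> arrs Q" "successively related l"
    using assms unfolding Nset_iff antipath_NPath_iff by auto
  have "\<not> (\<exists>a\<in>arrs Q. src Q a = tgt Q (hd l) \<and> \<sigma> a = \<tau> (hd l))"
    "\<not> (\<exists>b\<in>arrs Q. tgt Q b = src Q (last l) \<and> \<tau> b = \<sigma> (last l))"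
    using assms unfolding Nset_iff by auto
  then show "\<nexists>b. related b (hd l)" "\<nexists>c. related (last l) c"
    using relatedD related_signs by (metis, metis)
qed

lemma Mset_NPathD:
  assumes "NPath l \<in> MM"
  shows "l \<noteq> []" "set l \<subseteq> arrs Q" "successively permitted_step l"
    "\<nexists>b. permitted_step b (hd l)" "\<nexists>c. permitted_step (last l) c"
  using assms unfolding Mset_iff permitted_NPath_iff permitted_step_iff by auto

lemma Nset_ends:
  "w \<in> NN \<Longrightarrow> gsrc Q w \<in> verts Q \<and> gtgt Q w \<in> verts Q \<and> asig \<sigma> w \<in> {1, -1} \<and> atau \<tau> w \<in> {1, -1}"
proof (cases w)
  case (NPath l)
  assume "w \<in> NN"
  then have "l \<noteq> []" "set l \<subseteq> arrs Q" using Nset_NPathD(1,2)[of l] NPath by simp_all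
  then have "hd l \<in> arrs Q" "last l \<in> arrs Q" by auto
  then show ?thesis using NPath src_in_verts tgt_in_verts sign_values by simp
qed (simp add: Nset_iff)

lemma Mset_ends:
  "w \<in> MM \<Longrightarrow> gsrc Q w \<in> verts Q \<and> gtgt Q w \<in> verts Q \<and> psig \<sigma> w \<in> {1, -1} \<and> ptau \<tau> w \<in> {1, -1}"
proof (cases w)
  case (NPath l)
  assume "w \<in> MM"
  then have "l \<noteq> []" "set l \<subseteq> arrs Q" using Mset_NPathD(1,2)[of l] NPath by simp_all
  then have "hd l \<in> arrs Q" "last l \<in> arrs Q" by auto
  then show ?thesis using NPath src_in_verts tgt_in_verts sign_values by simp
qed (auto simp add: Mset_iff)

lemma Nset_unique_tgt:
  assumes "w1 \<in> NN" "w2 \<in> NN" "gtgt Q w1 = gtgt Q w2" "atau \<tau> w1 = atau \<tau> w2"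
  shows "w1 = w2"
proof -
  have hd_arr: "hd l \<in> arrs Q" if "NPath l \<in> NN" for l
    using Nset_NPathD(1,2)[OF that] by auto
  have paths: "l1 = l2" if "NPath l1 \<in> NN" "NPath l2 \<in> NN"
    "tgt Q (hd l1) = tgt Q (hd l2)" "\<tau> (hd l1) = \<tau> (hd l2)" for l1 l2
  proof (rule successively_maximal_unique[of related, OF related_right_unique])
    show "hd l1 = hd l2" by (rule tgt_sign_inj[OF hd_arr[OF that(1)] hd_arr[OF that(2)] that(3,4)])
  qed (use Nset_NPathD[OF that(1)] Nset_NPathD[OF that(2)] in auto)
  show ?thesis
    using assms paths hd_arr by (cases w1; cases w2) (auto simp: Nset_iff)
qed

lemma Mset_unique_src:
  assumes "w1 \<in> MM" "w2 \<in> MM" "gsrc Q w1 = gsrc Q w2" "psig \<sigma> w1 = psig \<sigma> w2"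
  shows "w1 = w2"
proof -
  have last_arr: "last l \<in> arrs Q" if "NPath l \<in> MM" for l
    using Mset_NPathD(1,2)[OF that] by auto
  have paths: "l1 = l2" if "NPath l1 \<in> MM" "NPath l2 \<in> MM"
    "src Q (last l1) = src Q (last l2)" "\<sigma> (last l1) = \<sigma> (last l2)" for l1 l2
  proof -
    have "rev l1 = rev l2"
    proof (rule successively_maximal_unique[of "\<lambda>a b. permitted_step b a"])
      show "hd (rev l1) = hd (rev l2)"
        using src_sign_inj[OF last_arr[OF that(1)] last_arr[OF that(2)] that(3,4)] by (simp add: hd_rev)
    qed (use permitted_step_left_unique Mset_NPathD[OF that(1)] Mset_NPathD[OF that(2)]
      in \<open>auto simp: last_rev\<close>)
    then show ?thesis by simp
  qed
  show ?thesis
    using assms paths last_arr by (cases w1; cases w2) (auto simp: Mset_iff)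
qed

lemma Nset_exists_tgt:
  assumes x: "x \<in> verts Q" and e: "e \<in> {1, -1}" and no_arrow: "\<not> (\<exists>a\<in>arrs Q. src Q a = x \<and> \<sigma> a = e)"
  obtains w where "w \<in> NN" "gtgt Q w = x" "atau \<tau> w = e"
proof (cases "\<exists>b\<in>arrs Q. tgt Q b = x \<and> \<tau> b = e")
  case False
  then have "Triv x e \<in> NN" using x e no_arrow by (simp add: Nset_iff)
  then show thesis using that by simp
next
  case True
  then obtain b0 where b0: "b0 \<in> arrs Q" "tgt Q b0 = x" "\<tau> b0 = e" by blast
  have source: "\<nexists>z. related z b0" using no_related_pred_iff[OF b0(1)] no_arrow b0 by simp
  have closed: "related a b \<Longrightarrow> b \<in> arrs Q" for a b using relatedD by blast
  obtain l where l: "successively related l" "l \<noteq> []" "hd l = b0" "set l \<subseteq> arrs Q"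
    "\<nexists>c. related (last l) c"
    by (rule maximal_successively_exists[of "arrs Q" related,
          OF finite_arrs closed related_left_unique b0(1) source])
  have last_arr: "last l \<in> arrs Q" using l(2,4) by auto
  have "\<not> (\<exists>b\<in>arrs Q. tgt Q b = src Q (last l) \<and> \<tau> b = \<sigma> (last l))"
    using l(5) no_related_succ_iff[OF last_arr] by blast
  moreover have "antipath Q (NPath l)" using l unfolding antipath_NPath_iff by simp
  ultimately have "NPath l \<in> NN" using l(3) no_arrow b0 by (simp add: Nset_iff)
  then show thesis using that l(3) b0 by simp
qed

lemma Mset_exists_src:
  assumes x: "x \<in> verts Q" and e: "e \<in> {1, -1}" and no_arrow: "\<not> (\<exists>b\<in>arrs Q. tgt Q b = x \<and> \<tau> b = - e)"
  obtains w where "w \<in> MM" "gsrc Q w = x" "psig \<sigma> w = e"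
proof (cases "\<exists>a\<in>arrs Q. src Q a = x \<and> \<sigma> a = e")
  case False
  then have "Triv x e \<in> MM" using x e no_arrow by (simp add: Mset_iff)
  then show thesis using that by simp
next
  case True
  then obtain a0 where a0: "a0 \<in> arrs Q" "src Q a0 = x" "\<sigma> a0 = e" by blast
  have source: "\<nexists>z. permitted_step a0 z" using no_arrow a0 unfolding permitted_step_iff by auto
  have closed: "permitted_step b a \<Longrightarrow> b \<in> arrs Q" for a b unfolding permitted_step_def by blast
  obtain l where l: "successively (\<lambda>a b. permitted_step b a) l" "l \<noteq> []" "hd l = a0"
    "set l \<subseteq> arrs Q" "\<nexists>c. permitted_step c (last l)"
    by (rule maximal_successively_exists[of "arrs Q" "\<lambda>a b. permitted_step b a",
        OF finite_arrs closed permitted_step_right_unique a0(1) source])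
  have "\<not> (\<exists>a\<in>arrs Q. src Q a = tgt Q (last l) \<and> \<sigma> a = - \<tau> (last l))"
    using l(2,4,5) last_in_set[OF l(2)] unfolding permitted_step_iff by blast
  moreover have "permitted Q (NPath (rev l))" using l unfolding permitted_NPath_iff by simp
  ultimately have "NPath (rev l) \<in> MM" using l(2,3) no_arrow a0 by (simp add: Mset_iff hd_rev last_rev)
  then show thesis using that l(2,3) a0 by (simp add: last_rev)
qed

lemma psi_map_props:
  assumes "w \<in> NN"
  shows "psi_map Q \<sigma> \<tau> w \<in> MM \<and> gsrc Q (psi_map Q \<sigma> \<tau> w) = gsrc Q w \<and>
    psig \<sigma> (psi_map Q \<sigma> \<tau> w) = - asig \<sigma> w"
proof -
  have "gsrc Q w \<in> verts Q" "- asig \<sigma> w \<in> {1, -1}" using Nset_ends[OF assms] by auto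
  moreover have "\<not> (\<exists>b\<in>arrs Q. tgt Q b = gsrc Q w \<and> \<tau> b = - (- asig \<sigma> w))"
    using assms by (simp add: Nset_iff)
  ultimately obtain v where v: "v \<in> MM" "gsrc Q v = gsrc Q w" "psig \<sigma> v = - asig \<sigma> w"
    by (rule Mset_exists_src)
  have "psi_map Q \<sigma> \<tau> w = v"
    unfolding psi_map_def by (rule the_equality) (use v Mset_unique_src in auto)
  then show ?thesis using v by simp
qed

lemma phi_map_props:
  assumes "w \<in> MM"
  shows "phi_map Q \<sigma> \<tau> w \<in> NN \<and> gtgt Q (phi_map Q \<sigma> \<tau> w) = gtgt Q w \<and>
    atau \<tau> (phi_map Q \<sigma> \<tau> w) = - ptau \<tau> w"
proof -
  have "gtgt Q w \<in> verts Q" "- ptau \<tau> w \<in> {1, -1}" using Mset_ends[OF assms] by auto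
  moreover have "\<not> (\<exists>a\<in>arrs Q. src Q a = gtgt Q w \<and> \<sigma> a = - ptau \<tau> w)"
    using assms by (simp add: Mset_iff)
  ultimately obtain v where v: "v \<in> NN" "gtgt Q v = gtgt Q w" "atau \<tau> v = - ptau \<tau> w"
    by (rule Nset_exists_tgt)
  have "phi_map Q \<sigma> \<tau> w = v"
    unfolding phi_map_def by (rule the_equality) (use v Nset_unique_tgt in auto)
  then show ?thesis using v by simp
qed

lemma Phi_map_Nset: "Phi_map Q \<sigma> \<tau> ` NN \<subseteq> NN"
  unfolding Phi_map_def using psi_map_props phi_map_props by auto

lemma inj_on_Nset_tgt: "inj_on (\<lambda>w. (gtgt Q w, atau \<tau> w)) NN"
  by (rule inj_onI) (use Nset_unique_tgt in auto)

lemma finite_Nset: "finite NN"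
proof (rule inj_on_finite[OF inj_on_Nset_tgt])
  show "(\<lambda>w. (gtgt Q w, atau \<tau> w)) ` NN \<subseteq> verts Q \<times> {1, -1}" using Nset_ends by auto
  show "finite (verts Q \<times> {1, -1::int})" using finite_verts by simp
qed

text \<open>Every pair (x, e) of a vertex and a sign is either (s a, \<sigma> a) for a unique arrow a,
  or (t w, \<tau> w) for a unique maximal antipath w.\<close>

lemma double_card_verts: "2 * card (verts Q) = card NN + card (arrs Q)"
proof -
  let ?top = "\<lambda>w. (gtgt Q w, atau \<tau> w)" and ?start = "\<lambda>a. (src Q a, \<sigma> a)"
  have inj_start: "inj_on ?start (arrs Q)" by (rule inj_onI) (use src_sign_inj in auto)
  have "verts Q \<times> {1, -1::int} = ?top ` NN \<union> ?start ` arrs Q"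
  proof (intro equalityI subsetI)
    fix p assume "p \<in> verts Q \<times> {1, -1::int}"
    then obtain x e where p: "p = (x, e)" "x \<in> verts Q" "e \<in> {1, -1}" by blast
    show "p \<in> ?top ` NN \<union> ?start ` arrs Q"
    proof (cases "\<exists>a\<in>arrs Q. src Q a = x \<and> \<sigma> a = e")
      case False
      then obtain w where "w \<in> NN" "gtgt Q w = x" "atau \<tau> w = e" using Nset_exists_tgt p(2,3) by blast
      then show ?thesis using p(1) by force
    qed (use p in force)
  qed (use Nset_ends src_in_verts sign_values in auto)
  moreover have "?top ` NN \<inter> ?start ` arrs Q = {}" by (auto simp: Nset_iff)
  ultimately have "card (verts Q \<times> {1, -1::int}) = card (?top ` NN) + card (?start ` arrs Q)"
    using finite_Nset finite_arrs by (simp add: card_Un_disjoint)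
  then show ?thesis using card_image[OF inj_on_Nset_tgt] card_image[OF inj_start] by (simp add: card_cartesian_product)
qed

lemma Cset_subset: "CC \<subseteq> arrs Q"
  unfolding Cset_def by auto

lemma finite_Cset: "finite CC"
  using finite_subset[OF Cset_subset finite_arrs] .

lemma Nset_nth_eq_imp:
  assumes "NPath l \<in> NN" "NPath l' \<in> NN" "i < length l" "j < length l'" "l ! i = l' ! j"
  shows "l = l' \<and> i = j"
proof -
  have "i = j \<and> hd l = hd l'"
    by (intro successively_nth_eq_from_source[of related, OF related_left_unique])
      (use Nset_NPathD[OF assms(1)] Nset_NPathD[OF assms(2)] assms(3-5) in auto)
  moreover have "l = l'"
    by (rule successively_maximal_unique[of related, OF related_right_unique])
      (use Nset_NPathD[OF assms(1)] Nset_NPathD[OF assms(2)] calculation in auto)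
  ultimately show ?thesis by simp
qed

lemma card_arrs_eq: "card (arrs Q) = card CC + (\<Sum>w\<in>NN. glen w)"
proof -
  define arrows :: "('v, 'a) gpath \<Rightarrow> 'a list"
    where "arrows w = (case w of NPath l \<Rightarrow> l | Triv x e \<Rightarrow> [])" for w
  define S where "S = Sigma NN (\<lambda>w. {..<glen w})"
  define pos where "pos = (\<lambda>(w, i). arrows w ! i)"
  have in_S: "\<exists>l. w = NPath l \<and> NPath l \<in> NN \<and> i < length l" if "(w, i) \<in> S" for w i
    using that unfolding S_def by (cases w) auto
  have "inj_on pos S"
  proof (rule inj_onI)
    fix p q assume "p \<in> S" "q \<in> S" and eq: "pos p = pos q"
    then obtain l i l' j where p: "p = (NPath l, i)" "NPath l \<in> NN" "i < length l"
      and q: "q = (NPath l', j)" "NPath l' \<in> NN" "j < length l'"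
      using in_S by (metis surj_pair)
    have "l ! i = l' ! j" using eq p(1) q(1) unfolding pos_def arrows_def by simp
    then show "p = q" using Nset_nth_eq_imp[OF p(2) q(2) p(3) q(3)] p(1) q(1) by simp
  qed
  moreover have "pos ` S = arrs Q - CC"
  proof (intro equalityI subsetI)
    fix a assume "a \<in> pos ` S"
    then obtain l i where "NPath l \<in> NN" "i < length l" "a = l ! i"
      using in_S unfolding pos_def arrows_def by fastforce
    then show "a \<in> arrs Q - CC" using Nset_NPathD(2) unfolding Cset_def by fastforce
  next
    fix a assume "a \<in> arrs Q - CC"
    then obtain l where "NPath l \<in> NN" "a \<in> set l" unfolding Cset_def by blast
    then obtain i where "i < length l" "a = l ! i" by (auto simp: in_set_conv_nth)
    then show "a \<in> pos ` S"
      using \<open>NPath l \<in> NN\<close> unfolding S_def pos_def arrows_def by force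
  qed
  ultimately have "card (arrs Q - CC) = card S" by (metis card_image)
  also have "card S = (\<Sum>w\<in>NN. glen w)" unfolding S_def using finite_Nset by simp
  finally show ?thesis
    using card_Diff_subset[OF finite_Cset Cset_subset] card_mono[OF finite_arrs Cset_subset] by simp
qed

text \<open>An arrow of \<open>\<C>\<close> without successor would be the start of a maximal antipath.\<close>

lemma Cset_has_related_succ:
  assumes a: "a \<in> CC"
  shows "\<exists>b. related a b"
proof (rule ccontr)
  assume source: "\<nexists>b. related a b"
  have a_arr: "a \<in> arrs Q" using a Cset_subset by blast
  have closed: "related b a' \<Longrightarrow> b \<in> arrs Q" for a' b using relatedD by blast
  obtain l where l: "successively (\<lambda>a b. related b a) l" "l \<noteq> []" "hd l = a" "set l \<subseteq> arrs Q"
    "\<nexists>c. related c (last l)"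
    by (rule maximal_successively_exists[of "arrs Q" "\<lambda>a b. related b a",
          OF finite_arrs closed related_right_unique a_arr source])
  have last_arr: "last l \<in> arrs Q" using l(2,4) by auto
  have "\<not> (\<exists>c\<in>arrs Q. src Q c = tgt Q (last l) \<and> \<sigma> c = \<tau> (last l))"
    using l(5) no_related_pred_iff[OF last_arr] by blast
  moreover have "\<not> (\<exists>b\<in>arrs Q. tgt Q b = src Q a \<and> \<tau> b = \<sigma> a)"
    using source no_related_succ_iff[OF a_arr] by blast
  moreover have "antipath Q (NPath (rev l))" using l unfolding antipath_NPath_iff by simp
  ultimately have "NPath (rev l) \<in> NN" using l(2,3) by (simp add: Nset_iff hd_rev last_rev)
  moreover have "a \<in> set (rev l)" using l(2,3) by auto
  ultimately show False using a unfolding Cset_def by blast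
qed

lemma Cset_related_succ_Cset:
  assumes a: "a \<in> CC" and r: "related a b"
  shows "b \<in> CC"
proof -
  have "b \<notin> set l" if l: "NPath l \<in> NN" for l
  proof
    assume "b \<in> set l"
    then obtain i where i: "i < length l" "b = l ! i" by (auto simp: in_set_conv_nth)
    show False
    proof (cases i)
      case 0
      then show False using Nset_NPathD(1,4)[OF l] i r by (simp add: hd_conv_nth)
    next
      case (Suc k)
      then have "related (l ! k) (l ! Suc k)" using successively_nth[OF Nset_NPathD(3)[OF l]] i(1) by simp
      then have "related (l ! k) b" using i(2) Suc by simp
      then have "l ! k = a" using related_left_unique r by blast
      moreover have "k < length l" using i(1) Suc by simp
      ultimately have "a \<in> set l" using nth_mem by blast
      then show False using a l unfolding Cset_def by blast
    qed
  qed
  then show ?thesis using relatedD[OF r] unfolding Cset_def by blast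
qed

lemma Psi_map_props:
  assumes a: "a \<in> CC"
  shows "Psi_map Q \<sigma> \<tau> a \<in> CC \<and> related a (Psi_map Q \<sigma> \<tau> a)"
proof -
  have a_arr: "a \<in> arrs Q" using a Cset_subset by blast
  obtain b where r: "related a b" using Cset_has_related_succ[OF a] ..
  have b: "b \<in> CC" "tgt Q b = src Q a" "\<tau> b = \<sigma> a"
    using Cset_related_succ_Cset[OF a r] relatedD[OF r] related_signs[OF r] by simp_all
  have "Psi_map Q \<sigma> \<tau> a = b"
    unfolding Psi_map_def
  proof (rule the_equality)
    fix c assume c: "c \<in> CC \<and> tgt Q c = src Q a \<and> \<tau> c = \<sigma> a"
    then have "related a c" using related_iff_signs[OF a_arr] Cset_subset by auto
    then show "c = b" using related_right_unique r by blast
  qed (use b in simp)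
  then show ?thesis using b(1) r by simp
qed

lemma inj_on_Psi_map: "inj_on (Psi_map Q \<sigma> \<tau>) CC"
  by (rule inj_onI) (metis Psi_map_props related_left_unique)

lemma Psi_map_Cset: "Psi_map Q \<sigma> \<tau> ` CC \<subseteq> CC"
  using Psi_map_props by blast

subsection \<open>Orbits and the invariant\<close>

lemma Psi_orbitsD:
  assumes "X \<in> Psi_orbits Q \<sigma> \<tau>"
  shows "X \<subseteq> CC \<and> X \<noteq> {}"
proof -
  obtain x where x: "x \<in> CC" "X = orb (Psi_map Q \<sigma> \<tau>) x" using assms unfolding Psi_orbits_def by blast
  then show ?thesis using orb_subset[OF Psi_map_Cset x(1)] orb_self[of x] by auto
qed

lemma Phi_orbitsD:
  assumes "X \<in> Phi_orbits Q \<sigma> \<tau>"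
  shows "X \<subseteq> NN \<and> X \<noteq> {}"
proof -
  obtain w where w: "w \<in> NN" "X = orb (Phi_map Q \<sigma> \<tau>) w" using assms unfolding Phi_orbits_def by blast
  then show ?thesis using orb_subset[OF Phi_map_Nset w(1)] orb_self[of w] by auto
qed

lemma card_Phi_orbit_pos: "X \<in> Phi_orbits Q \<sigma> \<tau> \<Longrightarrow> 0 < card X"
  using Phi_orbitsD finite_Nset finite_subset by (metis card_gt_0_iff)

lemma finite_Psi_orbits: "finite (Psi_orbits Q \<sigma> \<tau>)"
  unfolding Psi_orbits_def using finite_Cset by simp

lemma finite_Phi_orbits: "finite (Phi_orbits Q \<sigma> \<tau>)"
  unfolding Phi_orbits_def using finite_Nset by simp

lemma Psi_orbits_disjoint:
  "X \<in> Psi_orbits Q \<sigma> \<tau> \<Longrightarrow> Y \<in> Psi_orbits Q \<sigma> \<tau> \<Longrightarrow> X \<noteq> Y \<Longrightarrow> X \<inter> Y = {}"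
  unfolding Psi_orbits_def by (rule orbs_disjoint[OF finite_Cset inj_on_Psi_map Psi_map_Cset])

lemma card_Cset_eq_sum: "card CC = (\<Sum>X\<in>Psi_orbits Q \<sigma> \<tau>. card X)"
proof -
  have "CC = \<Union> (Psi_orbits Q \<sigma> \<tau>)"
    unfolding Psi_orbits_def using Union_orbs[OF Psi_map_Cset] by simp
  moreover have "pairwise disjnt (Psi_orbits Q \<sigma> \<tau>)"
    using Psi_orbits_disjoint unfolding pairwise_def disjnt_def by blast
  moreover have "finite X" if "X \<in> Psi_orbits Q \<sigma> \<tau>" for X
    using Psi_orbitsD[OF that] finite_Cset finite_subset by blast
  ultimately show ?thesis by (simp add: card_Union_disjoint)
qed

lemma Union_Phi_orbits: "\<Union> (Phi_orbits Q \<sigma> \<tau>) = NN"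
  unfolding Phi_orbits_def by (rule Union_orbs[OF Phi_map_Nset])

lemma finv_zero: "finv Q \<sigma> \<tau> 0 k = card {X \<in> Psi_orbits Q \<sigma> \<tau>. card X = k}"
proof -
  have empty: "{X \<in> Phi_orbits Q \<sigma> \<tau>. card X = 0 \<and> (\<Sum>w\<in>X. glen w) = k} = {}"
    using card_Phi_orbit_pos by fastforce
  show ?thesis unfolding finv_def empty by simp
qed

lemma finv_Phi_orbit_pos:
  assumes "X \<in> Phi_orbits Q \<sigma> \<tau>"
  shows "0 < finv Q \<sigma> \<tau> (card X) (\<Sum>w\<in>X. glen w)"
proof -
  let ?S = "{Y \<in> Phi_orbits Q \<sigma> \<tau>. card Y = card X \<and> (\<Sum>w\<in>Y. glen w) = (\<Sum>w\<in>X. glen w)}"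
  have "0 < card ?S" using assms finite_Phi_orbits by (auto simp: card_gt_0_iff)
  then show ?thesis unfolding finv_def by simp
qed

lemma finv_Psi_orbit_pos:
  assumes "X \<in> Psi_orbits Q \<sigma> \<tau>"
  shows "0 < finv Q \<sigma> \<tau> 0 (card X)"
  using assms finite_Psi_orbits by (auto simp: finv_zero card_gt_0_iff)

lemma triangle_bypass:
  assumes T: "T \<in> triangles Q \<sigma> \<tau>" and a: "a \<in> T"
  shows "\<exists>b\<in>T. \<exists>c\<in>T. b \<noteq> a \<and> c \<noteq> a \<and> tgt Q b = src Q a \<and> tgt Q c = src Q b \<and> src Q c = tgt Q a"
proof -
  let ?\<Psi> = "Psi_map Q \<sigma> \<tau>"
  obtain x where x: "x \<in> CC" "T = orb ?\<Psi> x" and card3: "card T = 3"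
    using T unfolding triangles_def Psi_orbits_def by blast
  have aC: "a \<in> CC" using Psi_orbitsD T a unfolding triangles_def by blast
  have T_a: "orb ?\<Psi> a = T" using orb_eq_if_mem[OF finite_Cset inj_on_Psi_map Psi_map_Cset x(1)] a x(2) by simp
  have cycle: "?\<Psi> a \<noteq> a" "?\<Psi> (?\<Psi> a) \<noteq> a" "?\<Psi> (?\<Psi> (?\<Psi> a)) = a"
    using orb_card_3[OF finite_Cset inj_on_Psi_map Psi_map_Cset aC] T_a card3 by simp_all
  have "?\<Psi> a \<in> T" "?\<Psi> (?\<Psi> a) \<in> T"
    using T_a unfolding orb_def by (auto intro: exI[of _ 1] exI[of _ 2] simp: numeral_2_eq_2)
  moreover have "related a (?\<Psi> a)" "related (?\<Psi> a) (?\<Psi> (?\<Psi> a))" "related (?\<Psi> (?\<Psi> a)) a"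
    using Psi_map_props aC Psi_map_props[of "?\<Psi> a"] Psi_map_props[of "?\<Psi> (?\<Psi> a)"] cycle(3) by auto
  ultimately show ?thesis using cycle(1,2) relatedD by metis
qed

lemma triangles_disjoint:
  "T \<in> triangles Q \<sigma> \<tau> \<Longrightarrow> T' \<in> triangles Q \<sigma> \<tau> \<Longrightarrow> T \<noteq> T' \<Longrightarrow> T \<inter> T' = {}"
  using Psi_orbits_disjoint unfolding triangles_def by blast

lemma triangles_subset_arrs: "T \<in> triangles Q \<sigma> \<tau> \<Longrightarrow> T \<subseteq> arrs Q"
  using Psi_orbitsD Cset_subset unfolding triangles_def by blast

context
  fixes ch :: "'a set \<Rightarrow> 'a"
  assumes choice: "\<forall>T\<in>triangles Q \<sigma> \<tau>. ch T \<in> T"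
begin

lemma triangle_choice_unique:
  assumes T: "T \<in> triangles Q \<sigma> \<tau>" and a: "a \<in> T" "a \<in> ch ` triangles Q \<sigma> \<tau>"
  shows "a = ch T"
proof -
  obtain T' where T': "T' \<in> triangles Q \<sigma> \<tau>" "a = ch T'" using a(2) by blast
  then have "a \<in> T \<inter> T'" using choice a(1) by auto
  then have "T = T'" using triangles_disjoint[OF T T'(1)] by auto
  then show ?thesis using T'(2) by simp
qed

lemma card_triangle_choice: "card (ch ` triangles Q \<sigma> \<tau>) = card (triangles Q \<sigma> \<tau>)"
proof (rule card_image, rule inj_onI)
  fix T T' assume T: "T \<in> triangles Q \<sigma> \<tau>" "T' \<in> triangles Q \<sigma> \<tau>" and "ch T = ch T'"
  then have "ch T \<in> T \<inter> T'" using choice by auto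
  then show "T = T'" using triangles_disjoint[OF T] by auto
qed

lemma triangle_choice_subset_arrs: "ch ` triangles Q \<sigma> \<tau> \<subseteq> arrs Q"
  using choice triangles_subset_arrs by blast

lemma qconnected_qdel_triangle_choice: "qconnected (qdel Q (ch ` triangles Q \<sigma> \<tau>))"
proof (rule qconnected_qdel)
  show "qconnected Q" using gentle unfolding gentle_def by blast
next
  let ?D = "ch ` triangles Q \<sigma> \<tau>"
  fix a assume "a \<in> ?D"
  then obtain T where T: "T \<in> triangles Q \<sigma> \<tau>" "a = ch T" by blast
  then obtain b c where bc: "b \<in> T" "c \<in> T" "b \<noteq> a" "c \<noteq> a"
    "tgt Q b = src Q a" "tgt Q c = src Q b" "src Q c = tgt Q a"
    using triangle_bypass choice by blast
  have "b \<notin> ?D" "c \<notin> ?D" using triangle_choice_unique[OF T(1)] bc T(2) by blast+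
  moreover have "b \<in> arrs Q" "c \<in> arrs Q" using triangles_subset_arrs[OF T(1)] bc(1,2) by blast+
  ultimately show "\<exists>b c. b \<in> arrs Q - ?D \<and> c \<in> arrs Q - ?D \<and>
      tgt Q b = src Q a \<and> tgt Q c = src Q b \<and> src Q c = tgt Q a"
    using bc by blast
qed

end

context
  fixes m p :: nat
  assumes finv_shape: "\<forall>a b. finv Q \<sigma> \<tau> a b =
    m * (if (a, b) = (0, 3) then 1 else 0) + (if (a, b) = (p + m + 2, p) then 1 else 0)"
begin

lemma card_Psi_orbit: "X \<in> Psi_orbits Q \<sigma> \<tau> \<Longrightarrow> card X = 3"
proof (rule ccontr)
  assume "X \<in> Psi_orbits Q \<sigma> \<tau>" "card X \<noteq> 3"
  then show False using finv_Psi_orbit_pos[of X] finv_shape by simp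
qed

lemma triangles_eq_Psi_orbits: "triangles Q \<sigma> \<tau> = Psi_orbits Q \<sigma> \<tau>"
  unfolding triangles_def using card_Psi_orbit by blast

lemma card_triangles: "card (triangles Q \<sigma> \<tau>) = m"
  using finv_zero[of 3] finv_shape unfolding triangles_def by simp

lemma card_Cset_shape: "card CC = 3 * m"
  using card_Cset_eq_sum card_Psi_orbit card_triangles triangles_eq_Psi_orbits by simp

text \<open>All \<Phi>-orbits have the shape (p + m + 2, p), and f counts exactly one of them.\<close>

lemma Nset_shape: "card NN = p + m + 2 \<and> (\<Sum>w\<in>NN. glen w) = p"
proof -
  let ?S = "{X \<in> Phi_orbits Q \<sigma> \<tau>. card X = p + m + 2 \<and> (\<Sum>w\<in>X. glen w) = p}"
  have "?S = Phi_orbits Q \<sigma> \<tau>"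
  proof (intro equalityI subsetI)
    fix X assume X: "X \<in> Phi_orbits Q \<sigma> \<tau>"
    show "X \<in> ?S" using X card_Phi_orbit_pos[OF X] finv_Phi_orbit_pos[OF X] finv_shape
      by (simp split: if_splits)
  qed simp
  moreover have "finv Q \<sigma> \<tau> (p + m + 2) p = card ?S" unfolding finv_def by simp
  ultimately have "card (Phi_orbits Q \<sigma> \<tau>) = 1" using finv_shape by simp
  then obtain X0 where X0: "Phi_orbits Q \<sigma> \<tau> = {X0}" by (rule card_1_singletonE)
  then have "NN = X0" using Union_Phi_orbits by simp
  moreover have "X0 \<in> ?S" using X0 \<open>?S = Phi_orbits Q \<sigma> \<tau>\<close> by simp
  ultimately show ?thesis by simp
qed

lemma card_arrs_shape: "card (arrs Q) = 3 * m + p"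
  using card_arrs_eq card_Cset_shape Nset_shape by simp

lemma card_verts_shape: "card (verts Q) = 2 * m + p + 1"
  using double_card_verts card_arrs_shape Nset_shape by simp

end

end


theorem lemma6p2:
  fixes Q :: "('v,'a) quiver" and \<sigma> \<tau> :: "'a \<Rightarrow> int" and m p :: nat
    and ch :: "'a set \<Rightarrow> 'a"
  assumes "gentle Q"
    and "admissible_signs Q \<sigma> \<tau>"
    and "\<forall>a b. finv Q \<sigma> \<tau> a b =
            m * (if (a,b) = (0,3) then 1 else 0) + (if (a,b) = (p+m+2, p) then 1 else 0)"
    and "\<forall>T\<in>triangles Q \<sigma> \<tau>. ch T \<in> T"
  shows "gentle (qdel Q (ch ` triangles Q \<sigma> \<tau>)) \<and>
         card (verts (qdel Q (ch ` triangles Q \<sigma> \<tau>)))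
           = card (arrs (qdel Q (ch ` triangles Q \<sigma> \<tau>))) + 1"
proof -
  interpret signed_gentle Q \<sigma> \<tau> by (rule signed_gentle.intro) (fact assms(1), fact assms(2))
  let ?D = "ch ` triangles Q \<sigma> \<tau>"
  have D: "?D \<subseteq> arrs Q" "card ?D = m"
    using triangle_choice_subset_arrs[OF assms(4)] card_triangle_choice[OF assms(4)]
      card_triangles[OF assms(3)] by simp_all
  then have "card (arrs (qdel Q ?D)) = 2 * m + p"
    using card_Diff_subset[OF finite_subset[OF D(1) finite_arrs] D(1)] card_arrs_shape[OF assms(3)]
    by simp
  moreover have "card (verts (qdel Q ?D)) = 2 * m + p + 1"
    using card_verts_shape[OF assms(3)] by simp
  moreover have "gentle (qdel Q ?D)"
    by (rule gentle_qdel[OF assms(1) qconnected_qdel_triangle_choice[OF assms(4)]])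
  ultimately show ?thesis by simp
qed

end
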